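(* Assume $0<b\gamma-m\mu<\mu^2$, so that $E_4=\Big(\frac{\mu^2-b\gamma+m\mu}{\mu\gamma},\frac{b\gamma-m\mu}{\mu\gamma},0,0\Big)$ has strictly positive $B$- and $I$-components. Then the Jacobian matrix of system (S) at $E_4$ never has a pair of nonzero purely imaginary eigenvalues; in particular, no Hopf bifurcation can occur at $E_4$ as parameters vary within this feasibility region.
   Context: The model (S) is the system of ODEs for healthy bees $B$, infected bees $I$, healthy mites $M$ and infected mites $N$: $$B'=b\frac{B}{B+I}-\lambda BN-\gamma BI-mB,$$ $$I'=b\frac{I}{B+I}+\lambda BN+\gamma BI-(m+\mu)I,$$ $$M'=r\Big(1-\frac{M+N}{K}\Big)(M+N)-\beta MI-\delta MN-eMB,$$ $$N'=-nN-pN(N+M)+\beta MI+\delta MN-eNB,$$ where all parameters $b,\lambda,\gamma,m,\mu,r,K,\beta,\delta,e,n,p$ are positive constants. *)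

theory Defs
  imports "HOL-Analysis.Derivative" "Jordan_Normal_Form.Char_Poly"
begin

text \<open>A state is a function x :: nat => real with
  x 0 = B (healthy bees), x 1 = I (infected bees), x 2 = M (healthy mites),
  x 3 = N (infected mites).\<close>

definition field_S ::
  "real \<Rightarrow> real \<Rightarrow> real \<Rightarrow> real \<Rightarrow> real \<Rightarrow> real \<Rightarrow> real \<Rightarrow> real \<Rightarrow> real \<Rightarrow> real \<Rightarrow> real \<Rightarrow> real
   \<Rightarrow> (nat \<Rightarrow> real) \<Rightarrow> nat \<Rightarrow> real" where
  "field_S b lam \<gamma> m \<mu> r K \<beta> \<delta> e n p x i =
    (let B = x 0; I = x 1; M = x 2; N = x 3 in
     if i = 0 then b * B / (B + I) - lam * B * N - \<gamma> * B * I - m * B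
     else if i = 1 then b * I / (B + I) + lam * B * N + \<gamma> * B * I - (m + \<mu>) * I
     else if i = 2 then r * (1 - (M + N) / K) * (M + N) - \<beta> * M * I - \<delta> * M * N - e * M * B
     else -n * N - p * N * (N + M) + \<beta> * M * I + \<delta> * M * N - e * N * B)"

definition jacobian_S ::
  "real \<Rightarrow> real \<Rightarrow> real \<Rightarrow> real \<Rightarrow> real \<Rightarrow> real \<Rightarrow> real \<Rightarrow> real \<Rightarrow> real \<Rightarrow> real \<Rightarrow> real \<Rightarrow> real
   \<Rightarrow> (nat \<Rightarrow> real) \<Rightarrow> real mat" where
  "jacobian_S b lam \<gamma> m \<mu> r K \<beta> \<delta> e n p x =
    mat 4 4 (\<lambda>(i, j). deriv (\<lambda>t. field_S b lam \<gamma> m \<mu> r K \<beta> \<delta> e n p (x(j := t)) i) (x j))"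

definition E4 :: "real \<Rightarrow> real \<Rightarrow> real \<Rightarrow> real \<Rightarrow> nat \<Rightarrow> real" where
  "E4 b \<gamma> m \<mu> = (\<lambda>i. if i = 0 then (\<mu>^2 - b * \<gamma> + m * \<mu>) / (\<mu> * \<gamma>)
                     else if i = 1 then (b * \<gamma> - m * \<mu>) / (\<mu> * \<gamma>)
                     else 0)"

end

theory Submission
  imports Defs
begin

text \<open>At a mite-free state the Jacobian of (S) is block upper triangular, with the
  bee block and the mite block on the diagonal. A nonzero purely imaginary eigenvalue
  \<open>\<i>\<omega>\<close> must therefore be an eigenvalue of one of the two real \<open>2\<times>2\<close> blocks, which
  forces that block to have trace \<open>0\<close> and determinant \<open>\<omega>\<^sup>2 > 0\<close>. At \<open>E4\<close> the bee block
  has trace \<open>-b\<gamma>/\<mu> \<noteq> 0\<close>, and whenever the mite block has trace \<open>0\<close> its determinant is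
  \<open>-(n + eB)\<^sup>2 - r\<beta>I < 0\<close>.\<close>

lemma imaginary_eigenpair_2x2:
  fixes a b c d \<omega> :: real and u w :: complex
  assumes "\<omega> \<noteq> 0"
    and "of_real a * u + of_real b * w = \<i> * of_real \<omega> * u"
    and "of_real c * u + of_real d * w = \<i> * of_real \<omega> * w"
    and "u \<noteq> 0 \<or> w \<noteq> 0"
  shows "a + d = 0 \<and> a * d - b * c = \<omega>\<^sup>2"
proof -
  define k where "k = \<i> * of_real \<omega>"
  define D where "D = (of_real a - k) * (of_real d - k) - of_real b * of_real c"
  have "D * u = (of_real d - k) * (of_real a * u + of_real b * w - k * u)
              - of_real b * (of_real c * u + of_real d * w - k * w)"
   and "D * w = (of_real a - k) * (of_real c * u + of_real d * w - k * w)
              - of_real c * (of_real a * u + of_real b * w - k * u)"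
    unfolding D_def by (simp_all add: algebra_simps)
  then have "D * u = 0" "D * w = 0"
    using assms(2,3) unfolding k_def by simp_all
  then have "D = 0"
    using assms(4) by auto
  then have "Re D = 0" "Im D = 0"
    by simp_all
  then have "a * d - \<omega>\<^sup>2 - b * c = 0" "\<omega> * (a + d) = 0"
    unfolding D_def k_def by (auto simp: algebra_simps power2_eq_square)
  with assms(1) show ?thesis
    by simp
qed

lemma imaginary_eigenvalue_block_triangular_4x4:
  fixes A :: "real mat" and \<omega> :: real
  assumes A: "A \<in> carrier_mat 4 4"
    and lower_left: "\<And>i j. i \<in> {2, 3} \<Longrightarrow> j \<in> {0, 1} \<Longrightarrow> A $$ (i, j) = 0"
    and "\<omega> \<noteq> 0"
    and "eigenvalue (map_mat complex_of_real A) (\<i> * complex_of_real \<omega>)"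
  shows "(A $$ (0, 0) + A $$ (1, 1) = 0 \<and> A $$ (0, 0) * A $$ (1, 1) - A $$ (0, 1) * A $$ (1, 0) = \<omega>\<^sup>2)
       \<or> (A $$ (2, 2) + A $$ (3, 3) = 0 \<and> A $$ (2, 2) * A $$ (3, 3) - A $$ (2, 3) * A $$ (3, 2) = \<omega>\<^sup>2)"
proof -
  obtain v where v: "v \<in> carrier_vec 4" "v \<noteq> 0\<^sub>v 4"
    and ev: "map_mat complex_of_real A *\<^sub>v v = (\<i> * complex_of_real \<omega>) \<cdot>\<^sub>v v"
    using assms(4) A unfolding eigenvalue_def eigenvector_def by auto
  have row: "(\<Sum>j<4. of_real (A $$ (i, j)) * v $ j) = \<i> * of_real \<omega> * v $ i" if "i < 4" for i
  proof -
    have "(map_mat complex_of_real A *\<^sub>v v) $ i = ((\<i> * complex_of_real \<omega>) \<cdot>\<^sub>v v) $ i"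
      using ev by simp
    then show ?thesis
      using that v A by (simp add: mult_mat_vec_def scalar_prod_def lessThan_atLeast0)
  qed
  have row2: "of_real (A $$ (2, 2)) * v $ 2 + of_real (A $$ (2, 3)) * v $ 3 = \<i> * of_real \<omega> * v $ 2"
   and row3: "of_real (A $$ (3, 2)) * v $ 2 + of_real (A $$ (3, 3)) * v $ 3 = \<i> * of_real \<omega> * v $ 3"
    using row[of 2] row[of 3] lower_left by (simp_all add: eval_nat_numeral)
  show ?thesis
  proof (cases "v $ 2 \<noteq> 0 \<or> v $ 3 \<noteq> 0")
    case True
    then show ?thesis
      using imaginary_eigenpair_2x2[OF \<open>\<omega> \<noteq> 0\<close> row2 row3] by blast
  next
    case False
    then have "v $ 2 = 0" "v $ 3 = 0"
      by auto
    moreover have "v $ 0 \<noteq> 0 \<or> v $ 1 \<noteq> 0"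
    proof (rule ccontr)
      assume "\<not> (v $ 0 \<noteq> 0 \<or> v $ 1 \<noteq> 0)"
      with \<open>v $ 2 = 0\<close> \<open>v $ 3 = 0\<close> v(1) have "v = 0\<^sub>v 4"
        by (intro eq_vecI) (auto simp: less_Suc_eq eval_nat_numeral)
      with v(2) show False
        by simp
    qed
    moreover have "of_real (A $$ (0, 0)) * v $ 0 + of_real (A $$ (0, 1)) * v $ 1 = \<i> * of_real \<omega> * v $ 0"
      and "of_real (A $$ (1, 0)) * v $ 0 + of_real (A $$ (1, 1)) * v $ 1 = \<i> * of_real \<omega> * v $ 1"
      using row[of 0] row[of 1] \<open>v $ 2 = 0\<close> \<open>v $ 3 = 0\<close> by (simp_all add: eval_nat_numeral)
    ultimately show ?thesis
      using imaginary_eigenpair_2x2[OF \<open>\<omega> \<noteq> 0\<close>] by blast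
  qed
qed

definition jacobian_S_mite_free ::
  "real \<Rightarrow> real \<Rightarrow> real \<Rightarrow> real \<Rightarrow> real \<Rightarrow> real \<Rightarrow> real \<Rightarrow> real \<Rightarrow> real \<Rightarrow> real \<Rightarrow> real \<Rightarrow> real mat" where
  "jacobian_S_mite_free b lam \<gamma> m \<mu> r \<beta> e n B I = mat 4 4 (\<lambda>(i, j).
    [[b * I / (B + I)\<^sup>2 - \<gamma> * I - m, - b * B / (B + I)\<^sup>2 - \<gamma> * B, 0, - lam * B],
     [- b * I / (B + I)\<^sup>2 + \<gamma> * I, b * B / (B + I)\<^sup>2 + \<gamma> * B - m - \<mu>, 0, lam * B],
     [0, 0, r - \<beta> * I - e * B, r],
     [0, 0, \<beta> * I, - n - e * B]] ! i ! j)"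

lemma jacobian_S_at_mite_free:
  assumes "x 0 + x 1 \<noteq> 0" "x 2 = 0" "x 3 = 0" "K \<noteq> 0"
  shows "jacobian_S b lam \<gamma> m \<mu> r K \<beta> \<delta> e n p x = jacobian_S_mite_free b lam \<gamma> m \<mu> r \<beta> e n (x 0) (x 1)"
proof (rule eq_matI)
  fix i j assume "i < dim_row (jacobian_S_mite_free b lam \<gamma> m \<mu> r \<beta> e n (x 0) (x 1))"
    and "j < dim_col (jacobian_S_mite_free b lam \<gamma> m \<mu> r \<beta> e n (x 0) (x 1))"
  then have "i \<in> {0, 1, 2, 3}" "j \<in> {0, 1, 2, 3}"
    by (auto simp: jacobian_S_mite_free_def)
  then show "jacobian_S b lam \<gamma> m \<mu> r K \<beta> \<delta> e n p x $$ (i, j)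
      = jacobian_S_mite_free b lam \<gamma> m \<mu> r \<beta> e n (x 0) (x 1) $$ (i, j)"
    unfolding jacobian_S_def jacobian_S_mite_free_def field_S_def Let_def
    apply (auto simp: assms(2,3))
    apply (auto intro!: DERIV_imp_deriv derivative_eq_intros
        simp: assms(1,4) add.commute power2_eq_square)
    using assms(1) by (simp_all add: field_simps power2_eq_square)
qed (simp_all add: jacobian_S_def jacobian_S_mite_free_def)

lemma imaginary_eigenvalue_jacobian_S_mite_free:
  assumes "\<omega> \<noteq> 0"
    and "eigenvalue (map_mat complex_of_real (jacobian_S_mite_free b lam \<gamma> m \<mu> r \<beta> e n B I))
          (\<i> * complex_of_real \<omega>)"
  shows "(b * I / (B + I)\<^sup>2 - \<gamma> * I - m) + (b * B / (B + I)\<^sup>2 + \<gamma> * B - m - \<mu>) = 0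
      \<or> ((r - \<beta> * I - e * B) + (- n - e * B) = 0
         \<and> (r - \<beta> * I - e * B) * (- n - e * B) - r * (\<beta> * I) = \<omega>\<^sup>2)"
proof -
  have "jacobian_S_mite_free b lam \<gamma> m \<mu> r \<beta> e n B I \<in> carrier_mat 4 4"
    and "\<And>i j. i \<in> {2, 3} \<Longrightarrow> j \<in> {0, 1} \<Longrightarrow> jacobian_S_mite_free b lam \<gamma> m \<mu> r \<beta> e n B I $$ (i, j) = 0"
    by (auto simp: jacobian_S_mite_free_def)
  from imaginary_eigenvalue_block_triangular_4x4[OF this assms] show ?thesis
    by (simp add: jacobian_S_mite_free_def) blast
qed

lemma mite_block_trace_zero_imp_det_neg:
  fixes r \<beta> e n B I :: real
  assumes "r > 0" "\<beta> > 0" "I > 0"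
    and "(r - \<beta> * I - e * B) + (- n - e * B) = 0"
  shows "(r - \<beta> * I - e * B) * (- n - e * B) - r * (\<beta> * I) < 0"
proof -
  have "(r - \<beta> * I - e * B) * (- n - e * B) - r * (\<beta> * I) = - (n + e * B)\<^sup>2 - r * (\<beta> * I)"
    using assms(4) by (simp add: power2_eq_square algebra_simps)
  also have "\<dots> < 0"
    using zero_le_power2[of "n + e * B"] mult_pos_pos[OF assms(1) mult_pos_pos[OF assms(2,3)]]
    by linarith
  finally show ?thesis .
qed

lemma bee_block_trace_E4:
  fixes b \<gamma> m \<mu> :: real
  assumes "\<gamma> > 0" "\<mu> > 0"
  defines "B \<equiv> E4 b \<gamma> m \<mu> 0" and "I \<equiv> E4 b \<gamma> m \<mu> 1"
  shows "(b * I / (B + I)\<^sup>2 - \<gamma> * I - m) + (b * B / (B + I)\<^sup>2 + \<gamma> * B - m - \<mu>) = - b * \<gamma> / \<mu>"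
proof -
  have "B + I = \<mu> / \<gamma>"
    using assms(1,2) unfolding B_def I_def E4_def by (simp add: field_simps power2_eq_square)
  have "b * I / (B + I)\<^sup>2 + b * B / (B + I)\<^sup>2 = b * (B + I) / (B + I)\<^sup>2"
    by (simp add: add_divide_distrib algebra_simps)
  also have "\<dots> = b * \<gamma> / \<mu>"
    using \<open>B + I = \<mu> / \<gamma>\<close> assms(1,2) by (simp add: power2_eq_square)
  finally have "b * I / (B + I)\<^sup>2 + b * B / (B + I)\<^sup>2 = b * \<gamma> / \<mu>" .
  moreover have "\<gamma> * (B - I) = \<mu> + 2 * m - 2 * b * \<gamma> / \<mu>"
    using assms(1,2) unfolding B_def I_def E4_def by (simp add: field_simps power2_eq_square)
  ultimately show ?thesis
    by (simp add: algebra_simps)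
qed

theorem mainTheorem10:
  fixes b lam \<gamma> m \<mu> r K \<beta> \<delta> e n p :: real
  assumes "b > 0" "lam > 0" "\<gamma> > 0" "m > 0" "\<mu> > 0" "r > 0" "K > 0"
      "\<beta> > 0" "\<delta> > 0" "e > 0" "n > 0" "p > 0"
    and "0 < b * \<gamma> - m * \<mu>" and "b * \<gamma> - m * \<mu> < \<mu>^2"
  shows "\<forall>\<omega>::real. \<omega> \<noteq> 0 \<longrightarrow>
    \<not> eigenvalue (map_mat complex_of_real
          (jacobian_S b lam \<gamma> m \<mu> r K \<beta> \<delta> e n p (E4 b \<gamma> m \<mu>)))
        (\<i> * complex_of_real \<omega>)"
proof (intro allI impI notI)
  fix \<omega> :: real
  assume "\<omega> \<noteq> 0"
  define B I where "B = E4 b \<gamma> m \<mu> 0" and "I = E4 b \<gamma> m \<mu> 1"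
  have "B > 0" "I > 0"
    using assms unfolding B_def I_def E4_def by (auto intro!: divide_pos_pos)
  have "jacobian_S b lam \<gamma> m \<mu> r K \<beta> \<delta> e n p (E4 b \<gamma> m \<mu>)
      = jacobian_S_mite_free b lam \<gamma> m \<mu> r \<beta> e n B I"
    using \<open>B > 0\<close> \<open>I > 0\<close> assms(7) unfolding B_def I_def
    by (intro jacobian_S_at_mite_free) (auto simp: E4_def)
  moreover assume "eigenvalue (map_mat complex_of_real
      (jacobian_S b lam \<gamma> m \<mu> r K \<beta> \<delta> e n p (E4 b \<gamma> m \<mu>))) (\<i> * complex_of_real \<omega>)"
  ultimately have "(b * I / (B + I)\<^sup>2 - \<gamma> * I - m) + (b * B / (B + I)\<^sup>2 + \<gamma> * B - m - \<mu>) = 0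
      \<or> ((r - \<beta> * I - e * B) + (- n - e * B) = 0
         \<and> (r - \<beta> * I - e * B) * (- n - e * B) - r * (\<beta> * I) = \<omega>\<^sup>2)"
    by (metis imaginary_eigenvalue_jacobian_S_mite_free[OF \<open>\<omega> \<noteq> 0\<close>])
  moreover have "(b * I / (B + I)\<^sup>2 - \<gamma> * I - m) + (b * B / (B + I)\<^sup>2 + \<gamma> * B - m - \<mu>) \<noteq> 0"
    using bee_block_trace_E4[of \<gamma> \<mu> b m] assms(1,3,5) unfolding B_def I_def by simp
  moreover have "(r - \<beta> * I - e * B) * (- n - e * B) - r * (\<beta> * I) < 0"
    if "(r - \<beta> * I - e * B) + (- n - e * B) = 0"
    using mite_block_trace_zero_imp_det_neg[OF assms(6,8) \<open>I > 0\<close> that] .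
  moreover have "\<omega>\<^sup>2 > 0"
    using \<open>\<omega> \<noteq> 0\<close> by simp
  ultimately show False
    by auto
qed

end
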